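(* There is a function $\varepsilon:\mathbb{N}\to\mathbb{R}_{\ge0}$ with $\varepsilon(n)\to 0$ as $n\to\infty$ such that every $(1,1)$-criss-cross deletion correcting code $\mathcal{C}\subseteq\{0,1\}^{n\times n}$ satisfies $$|\mathcal{C}|\le (1+\varepsilon(n))\,\frac{2^{n^2}}{2^{2n-1}\cdot \frac{n^2}{2}}.$$ Consequently the redundancy $n^2-\log_2|\mathcal{C}|$ is asymptotically at least $2n-2+2\log_2 n$.
   Context: For a binary array $\mathbf{X}$, $\mathbb{D}_{1,1}(\mathbf{X})$ is the set of arrays obtained from $\mathbf{X}$ by deleting one row and one column. A code $\mathcal{C}\subseteq\{0,1\}^{n\times n}$ is a $(1,1)$-criss-cross deletion correcting code if $\mathbb{D}_{1,1}(\mathbf{X})\cap\mathbb{D}_{1,1}(\mathbf{Y})=\emptyset$ for all distinct $\mathbf{X},\mathbf{Y}\in\mathcal{C}$. The redundancy of $\mathcal{C}$ is $n^2-\log_2|\mathcal{C}|$. *)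

theory Defs
  imports Complex_Main
begin

text \<open>A binary n x n array is represented as a function nat => nat => bool
  that is False outside the index range {0..<n} x {0..<n}.\<close>

definition arrays :: "nat \<Rightarrow> (nat \<Rightarrow> nat \<Rightarrow> bool) set" where
  "arrays n = {X. \<forall>i j. (n \<le> i \<or> n \<le> j) \<longrightarrow> X i j = False}"

definition del_row_col :: "nat \<Rightarrow> (nat \<Rightarrow> nat \<Rightarrow> bool) \<Rightarrow> nat \<Rightarrow> nat \<Rightarrow> (nat \<Rightarrow> nat \<Rightarrow> bool)" where
  "del_row_col n X r c = (\<lambda>i j. if i < n - 1 \<and> j < n - 1
      then X (if i < r then i else Suc i) (if j < c then j else Suc j) else False)"

definition D11 :: "nat \<Rightarrow> (nat \<Rightarrow> nat \<Rightarrow> bool) \<Rightarrow> (nat \<Rightarrow> nat \<Rightarrow> bool) set" where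
  "D11 n X = {del_row_col n X r c | r c. r < n \<and> c < n}"

definition criss_cross_11_code :: "nat \<Rightarrow> (nat \<Rightarrow> nat \<Rightarrow> bool) set \<Rightarrow> bool" where
  "criss_cross_11_code n C \<longleftrightarrow> C \<subseteq> arrays n \<and>
     (\<forall>X\<in>C. \<forall>Y\<in>C. X \<noteq> Y \<longrightarrow> D11 n X \<inter> D11 n Y = {})"

end

(*
  An array X with at most m "bad" pairs of adjacent rows (rows that become equal after deleting
  one entry from each) and at most m bad pairs of adjacent columns has at least (n - m)^2 distinct
  (1,1)-deletions: deleting different good rows or different good columns gives different arrays.
  The deletion balls of the codewords are disjoint subsets of the 2^((n-1)^2) arrays of size n - 1,
  so a code has at most 2^((n-1)^2) / (n - m)^2 such codewords. An array with m prescribed bad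
  row pairs is built row by row with at most 2 n^2 choices for each row following a bad pair,
  so taking m = n div 4 the remaining codewords number at most
  2^n 2^(n^2) (2 n^2 / 2^n)^m, a vanishing fraction of the sphere-packing bound.
*)
theory Submission
  imports Defs "HOL-Real_Asymp.Real_Asymp"
begin

definition constrained_seqs ::
    "'a \<Rightarrow> 'a set \<Rightarrow> nat set \<Rightarrow> ('a \<Rightarrow> 'a \<Rightarrow> bool) \<Rightarrow> nat \<Rightarrow> (nat \<Rightarrow> 'a) set" where
  "constrained_seqs d A B R k = {f. (\<forall>i. k \<le> i \<longrightarrow> f i = d) \<and> (\<forall>i<k. f i \<in> A) \<and>
     (\<forall>i\<in>B. Suc i < k \<longrightarrow> R (f i) (f (Suc i)))}"

lemma finite_constrained_seqs:
  assumes "finite A"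
  shows "finite (constrained_seqs d A B R k)"
proof (rule finite_subset)
  show "constrained_seqs d A B R k \<subseteq> {f. \<forall>i. (i \<in> {..<k} \<longrightarrow> f i \<in> A) \<and> (i \<notin> {..<k} \<longrightarrow> f i = d)}"
    unfolding constrained_seqs_def by auto
  show "finite \<dots>"
    using assms by (intro finite_set_of_finite_funs) auto
qed

lemma card_constrained_seqs_Suc_le:
  assumes A: "finite A" "card A \<le> a" and R: "\<And>x. x \<in> A \<Longrightarrow> card {y\<in>A. R x y} \<le> b"
  shows "card (constrained_seqs d A B R (Suc k))
    \<le> card (constrained_seqs d A B R k) * (if k \<in> Suc ` B then b else a)"
proof -
  define S where "S = constrained_seqs d A B R k"
  define F where "F g = (if k \<in> Suc ` B then {y\<in>A. R (g (k - 1)) y} else A)" for g :: "nat \<Rightarrow> 'a"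
  have "finite S"
    unfolding S_def using A(1) by (rule finite_constrained_seqs)
  have "inj_on (\<lambda>f. (f(k := d), f k)) (constrained_seqs d A B R (Suc k))"
    by (rule inj_onI) (metis fun_upd_triv fun_upd_upd prod.inject)
  moreover have "(\<lambda>f. (f(k := d), f k)) ` constrained_seqs d A B R (Suc k) \<subseteq> Sigma S F"
    unfolding S_def F_def constrained_seqs_def by (auto simp: less_Suc_eq)
  ultimately have "card (constrained_seqs d A B R (Suc k)) \<le> card (Sigma S F)"
    using \<open>finite S\<close> A by (intro card_inj_on_le) (auto simp: F_def)
  also have "\<dots> = (\<Sum>g\<in>S. card (F g))"
    using \<open>finite S\<close> A by (intro card_SigmaI) (auto simp: F_def)
  also have "\<dots> \<le> (\<Sum>g\<in>S. if k \<in> Suc ` B then b else a)"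
  proof (rule sum_mono)
    fix g assume "g \<in> S"
    then have "g (k - 1) \<in> A" if "k \<in> Suc ` B"
      using that unfolding S_def constrained_seqs_def by auto
    then show "card (F g) \<le> (if k \<in> Suc ` B then b else a)"
      unfolding F_def using A R by auto
  qed
  finally show ?thesis
    by (simp add: S_def)
qed

lemma card_constrained_seqs_le:
  assumes "finite A" "card A \<le> a" "\<And>x. x \<in> A \<Longrightarrow> card {y\<in>A. R x y} \<le> b"
    and B: "B \<subseteq> {i. Suc i < k}"
  shows "card (constrained_seqs d A B R k) \<le> a ^ (k - card B) * b ^ card B"
proof -
  have SucB: "Suc ` B \<subseteq> {..<k}"
    using B by auto
  have "card (constrained_seqs d A B R k) \<le> (\<Prod>i<k. if i \<in> Suc ` B then b else a)"
  proof (induction k)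
    case 0
    have "constrained_seqs d A B R 0 = {\<lambda>_. d}"
      unfolding constrained_seqs_def by auto
    then show ?case
      by simp
  next
    case (Suc k)
    have "card (constrained_seqs d A B R (Suc k))
        \<le> card (constrained_seqs d A B R k) * (if k \<in> Suc ` B then b else a)"
      using assms(1-3) by (rule card_constrained_seqs_Suc_le)
    also have "\<dots> \<le> (\<Prod>i<k. if i \<in> Suc ` B then b else a) * (if k \<in> Suc ` B then b else a)"
      using Suc.IH by (rule mult_le_mono1)
    finally show ?case
      by simp
  qed
  also have "\<dots> = b ^ card ({..<k} \<inter> Suc ` B) * a ^ card ({..<k} - Suc ` B)"
    by (simp add: prod.If_cases Diff_eq)
  also have "{..<k} \<inter> Suc ` B = Suc ` B"
    using SucB by auto
  also have "card (Suc ` B) = card B"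
    by (simp add: card_image)
  also have "card ({..<k} - Suc ` B) = k - card B"
    using SucB finite_subset by (subst card_Diff_subset) (auto simp: card_image)
  finally show ?thesis
    by (simp add: mult.commute)
qed

definition rows :: "nat \<Rightarrow> (nat \<Rightarrow> bool) set" where
  "rows n = {x. \<forall>j. x j \<longrightarrow> j < n}"

lemma bij_betw_rows_Pow: "bij_betw (\<lambda>x. {j. x j}) (rows n) (Pow {..<n})"
  by (rule bij_betw_byWitness[where f' = "\<lambda>S j. j \<in> S"]) (auto simp: rows_def)

lemma card_rows: "card (rows n) = 2 ^ n"
  using bij_betw_same_card[OF bij_betw_rows_Pow] by (simp add: card_Pow)

lemma finite_rows: "finite (rows n)"
  using bij_betw_finite[OF bij_betw_rows_Pow] by simp

lemma mem_arrays_iff: "X \<in> arrays n \<longleftrightarrow> (\<forall>i j. X i j \<longrightarrow> i < n \<and> j < n)"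
  unfolding arrays_def by (auto simp: not_le[symmetric])

lemma bij_betw_arrays_Pow: "bij_betw (\<lambda>X. {(i, j). X i j}) (arrays n) (Pow ({..<n} \<times> {..<n}))"
  by (rule bij_betw_byWitness[where f' = "\<lambda>S i j. (i, j) \<in> S"])
    (auto simp: mem_arrays_iff)

lemma card_arrays: "card (arrays n) = 2 ^ (n * n)"
  using bij_betw_same_card[OF bij_betw_arrays_Pow] by (simp add: card_Pow card_cartesian_product)

lemma finite_arrays: "finite (arrays n)"
  using bij_betw_finite[OF bij_betw_arrays_Pow] by simp

definition skip :: "nat \<Rightarrow> nat \<Rightarrow> nat" where
  "skip u j = (if j < u then j else Suc j)"

definition deletion_close :: "nat \<Rightarrow> (nat \<Rightarrow> bool) \<Rightarrow> (nat \<Rightarrow> bool) \<Rightarrow> bool" where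
  "deletion_close n x y \<longleftrightarrow> (\<exists>u<n. \<exists>v<n. \<forall>j<n - 1. x (skip u j) = y (skip v j))"

definition insert_entry :: "nat \<Rightarrow> nat \<Rightarrow> bool \<Rightarrow> (nat \<Rightarrow> bool) \<Rightarrow> (nat \<Rightarrow> bool)" where
  "insert_entry n v t z = (\<lambda>k. k < n \<and> (if k = v then t else z (if k < v then k else k - 1)))"

lemma insert_entry_skip:
  assumes "x \<in> rows n" "v < n"
  shows "insert_entry n v (x v) (\<lambda>j. x (skip v j)) = x"
  using assms by (auto simp: fun_eq_iff insert_entry_def skip_def rows_def)

lemma insert_entry_cong:
  assumes "v < n" "\<forall>j<n - 1. z j = z' j"
  shows "insert_entry n v t z = insert_entry n v t z'"
  using assms by (auto simp: fun_eq_iff insert_entry_def)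

lemma card_deletion_close_le: "card {y\<in>rows n. deletion_close n x y} \<le> 2 * n^2"
proof -
  define g where "g = (\<lambda>(u, v, t). insert_entry n v t (\<lambda>j. x (skip u j)))"
  have "{y\<in>rows n. deletion_close n x y} \<subseteq> g ` ({..<n} \<times> {..<n} \<times> UNIV)"
  proof
    fix y assume "y \<in> {y\<in>rows n. deletion_close n x y}"
    then obtain u v where y: "y \<in> rows n" "u < n" "v < n" "\<forall>j<n - 1. x (skip u j) = y (skip v j)"
      unfolding deletion_close_def by auto
    have "y = insert_entry n v (y v) (\<lambda>j. y (skip v j))"
      using y by (simp add: insert_entry_skip)
    also have "\<dots> = g (u, v, y v)"
      unfolding g_def using y(3,4) by (auto intro: insert_entry_cong)
    finally show "y \<in> g ` ({..<n} \<times> {..<n} \<times> UNIV)"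
      using y by blast
  qed
  then have "card {y\<in>rows n. deletion_close n x y} \<le> card (g ` ({..<n} \<times> {..<n} \<times> UNIV))"
    by (intro card_mono) auto
  also have "\<dots> \<le> card ({..<n} \<times> {..<n} \<times> (UNIV :: bool set))"
    by (rule card_image_le) auto
  also have "\<dots> = 2 * n^2"
    by (simp add: card_cartesian_product power2_eq_square)
  finally show ?thesis .
qed

definition bad_rows :: "nat \<Rightarrow> (nat \<Rightarrow> nat \<Rightarrow> bool) \<Rightarrow> nat set" where
  "bad_rows n X = {i. Suc i < n \<and> deletion_close n (X i) (X (Suc i))}"

lemma bad_rows_subset: "bad_rows n X \<subseteq> {..<n - 1}"
  unfolding bad_rows_def by auto

lemma del_row_col_skip:
  "del_row_col n X r c = (\<lambda>i j. i < n - 1 \<and> j < n - 1 \<and> X (skip r i) (skip c j))"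
  unfolding del_row_col_def skip_def by (intro ext) auto

lemma del_row_col_conversep: "del_row_col n X\<inverse>\<inverse> c r = (del_row_col n X r c)\<inverse>\<inverse>"
  unfolding del_row_col_skip by (auto simp: fun_eq_iff)

lemma bad_row_if_del_row_col_eq:
  assumes "r < r'" "r' < n" "c < n" "c' < n" "del_row_col n X r c = del_row_col n X r' c'"
  shows "r \<in> bad_rows n X"
proof -
  have "skip r r = Suc r" "skip r' r = r"
    using assms(1) by (auto simp: skip_def)
  moreover have "del_row_col n X r c r j = del_row_col n X r' c' r j" for j
    using assms(5) by simp
  moreover have "r < n - 1"
    using assms(1,2) by simp
  ultimately have "\<forall>j<n - 1. X r (skip c' j) = X (Suc r) (skip c j)"
    by (auto simp: del_row_col_skip)
  then have "deletion_close n (X r) (X (Suc r))"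
    unfolding deletion_close_def using assms by blast
  then show ?thesis
    unfolding bad_rows_def using assms by auto
qed

lemma inj_on_del_row_col:
  "inj_on (\<lambda>(r, c). del_row_col n X r c) (({..<n} - bad_rows n X) \<times> ({..<n} - bad_rows n X\<inverse>\<inverse>))"
proof (rule inj_onI, clarsimp)
  fix r c r' c'
  assume r: "r < n" "r \<notin> bad_rows n X" "r' < n" "r' \<notin> bad_rows n X"
    and c: "c < n" "c \<notin> bad_rows n X\<inverse>\<inverse>" "c' < n" "c' \<notin> bad_rows n X\<inverse>\<inverse>"
    and eq: "del_row_col n X r c = del_row_col n X r' c'"
  show "r = r' \<and> c = c'"
  proof (intro conjI)
    show "r = r'"
      using bad_row_if_del_row_col_eq[OF _ _ _ _ eq] bad_row_if_del_row_col_eq[OF _ _ _ _ eq[symmetric]]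
        r c by (metis linorder_neqE_nat)
    then have "del_row_col n X\<inverse>\<inverse> c r = del_row_col n X\<inverse>\<inverse> c' r"
      using eq by (simp add: del_row_col_conversep)
    then show "c = c'"
      using bad_row_if_del_row_col_eq[of c c' n r r "X\<inverse>\<inverse>"]
        bad_row_if_del_row_col_eq[of c' c n r r "X\<inverse>\<inverse>"] r c by (metis linorder_neqE_nat)
  qed
qed

lemma D11_eq_image: "D11 n X = (\<lambda>(r, c). del_row_col n X r c) ` ({..<n} \<times> {..<n})"
  unfolding D11_def by auto

lemma finite_D11: "finite (D11 n X)"
  unfolding D11_eq_image by simp

lemma D11_subset_arrays: "D11 n X \<subseteq> arrays (n - 1)"
  unfolding D11_def arrays_def del_row_col_def by auto

lemma card_D11_ge: "(n - card (bad_rows n X)) * (n - card (bad_rows n X\<inverse>\<inverse>)) \<le> card (D11 n X)"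
proof -
  define S where "S = ({..<n} - bad_rows n X) \<times> ({..<n} - bad_rows n X\<inverse>\<inverse>)"
  have "n - card (bad_rows n Y) \<le> card ({..<n} - bad_rows n Y)" for Y
    using diff_card_le_card_Diff[of "bad_rows n Y" "{..<n}"] finite_subset[OF bad_rows_subset] by simp
  then have "(n - card (bad_rows n X)) * (n - card (bad_rows n X\<inverse>\<inverse>)) \<le> card S"
    unfolding S_def card_cartesian_product by (intro mult_le_mono)
  also have "\<dots> = card ((\<lambda>(r, c). del_row_col n X r c) ` S)"
    unfolding S_def using inj_on_del_row_col by (rule card_image[symmetric])
  also have "\<dots> \<le> card (D11 n X)"
    by (intro card_mono finite_D11) (auto simp: S_def D11_eq_image)
  finally show ?thesis .
qed

lemma card_bad_rows_superset_le:
  assumes "B \<subseteq> {i. Suc i < n}"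
  shows "card {X\<in>arrays n. B \<subseteq> bad_rows n X} \<le> (2^n) ^ (n - card B) * (2 * n^2) ^ card B"
proof -
  \<comment> \<open>An array is the sequence of its rows, padded with the empty row.\<close>
  have "{X\<in>arrays n. B \<subseteq> bad_rows n X} \<subseteq> constrained_seqs (\<lambda>_. False) (rows n) B (deletion_close n) n"
    unfolding constrained_seqs_def bad_rows_def mem_arrays_iff rows_def by (auto simp: fun_eq_iff) (meson leD)
  then have "card {X\<in>arrays n. B \<subseteq> bad_rows n X}
      \<le> card (constrained_seqs (\<lambda>_. False) (rows n) B (deletion_close n) n)"
    by (intro card_mono finite_constrained_seqs finite_rows)
  also have "\<dots> \<le> (2^n) ^ (n - card B) * (2 * n^2) ^ card B"
    using finite_rows card_rows card_deletion_close_le assms by (intro card_constrained_seqs_le) auto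
  finally show ?thesis .
qed

lemma card_many_bad_rows_le:
  "card {X\<in>arrays n. m \<le> card (bad_rows n X)} \<le> (n - 1 choose m) * ((2^n) ^ (n - m) * (2 * n^2) ^ m)"
proof -
  define I where "I = {B. B \<subseteq> {..<n - 1} \<and> card B = m}"
  have "finite I"
    unfolding I_def by (rule finite_subset[of _ "Pow {..<n - 1}"]) auto
  have "card I = n - 1 choose m"
    unfolding I_def using n_subsets[of "{..<n - 1}" m] by simp
  have "{X\<in>arrays n. m \<le> card (bad_rows n X)} \<subseteq> (\<Union>B\<in>I. {X\<in>arrays n. B \<subseteq> bad_rows n X})"
  proof clarify
    fix X assume X: "X \<in> arrays n" "m \<le> card (bad_rows n X)"
    then obtain B where B: "B \<subseteq> bad_rows n X" "card B = m"
      by (meson obtain_subset_with_card_n)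
    then have "B \<in> I"
      unfolding I_def using bad_rows_subset by blast
    then show "X \<in> (\<Union>B\<in>I. {X\<in>arrays n. B \<subseteq> bad_rows n X})"
      using X B by blast
  qed
  then have "card {X\<in>arrays n. m \<le> card (bad_rows n X)}
      \<le> card (\<Union>B\<in>I. {X\<in>arrays n. B \<subseteq> bad_rows n X})"
    using \<open>finite I\<close> finite_arrays by (intro card_mono) auto
  also have "\<dots> \<le> (\<Sum>B\<in>I. card {X\<in>arrays n. B \<subseteq> bad_rows n X})"
    using \<open>finite I\<close> by (rule card_UN_le)
  also have "\<dots> \<le> (\<Sum>B\<in>I. (2^n) ^ (n - m) * (2 * n^2) ^ m)"
  proof (rule sum_mono)
    fix B assume "B \<in> I"
    then have "B \<subseteq> {i. Suc i < n}" "card B = m"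
      unfolding I_def by auto
    then show "card {X\<in>arrays n. B \<subseteq> bad_rows n X} \<le> (2^n) ^ (n - m) * (2 * n^2) ^ m"
      using card_bad_rows_superset_le[of B n] by simp
  qed
  also have "\<dots> = (n - 1 choose m) * ((2^n) ^ (n - m) * (2 * n^2) ^ m)"
    using \<open>card I = n - 1 choose m\<close> by simp
  finally show ?thesis .
qed

lemma conversep_in_arrays: "X \<in> arrays n \<Longrightarrow> X\<inverse>\<inverse> \<in> arrays n"
  by (simp add: mem_arrays_iff)

lemma card_many_bad_cols_eq:
  "card {X\<in>arrays n. m \<le> card (bad_rows n X\<inverse>\<inverse>)} = card {X\<in>arrays n. m \<le> card (bad_rows n X)}"
  by (rule bij_betw_same_card[of conversep], rule bij_betw_byWitness[of _ conversep])
    (auto simp: conversep_in_arrays)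

lemma card_mult_le_card_if_disjoint_subsets:
  assumes "finite U" "\<And>X. X \<in> C \<Longrightarrow> D X \<subseteq> U" "\<And>X. X \<in> C \<Longrightarrow> s \<le> card (D X)"
    and "\<forall>X\<in>C. \<forall>Y\<in>C. X \<noteq> Y \<longrightarrow> D X \<inter> D Y = {}"
  shows "card C * s \<le> card U"
proof (cases "finite C")
  case True
  have "card C * s = (\<Sum>X\<in>C. s)"
    by simp
  also have "\<dots> \<le> (\<Sum>X\<in>C. card (D X))"
    using assms(3) by (rule sum_mono)
  also have "\<dots> = card (\<Union>X\<in>C. D X)"
    using True assms(4) finite_subset[OF assms(2) assms(1)] by (intro card_UN_disjoint[symmetric]) auto
  also have "\<dots> \<le> card U"
    using assms by (intro card_mono) auto
  finally show ?thesis .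
qed simp

lemma card_code_few_bad_le:
  assumes "criss_cross_11_code n C"
  shows "card {X\<in>C. card (bad_rows n X) < m \<and> card (bad_rows n X\<inverse>\<inverse>) < m} * (n - m)^2
    \<le> 2 ^ ((n - 1) * (n - 1))"
proof -
  have "card {X\<in>C. card (bad_rows n X) < m \<and> card (bad_rows n X\<inverse>\<inverse>) < m} * (n - m)^2
      \<le> card (arrays (n - 1))"
  proof (rule card_mult_le_card_if_disjoint_subsets)
    show "(n - m)^2 \<le> card (D11 n X)"
      if "X \<in> {X\<in>C. card (bad_rows n X) < m \<and> card (bad_rows n X\<inverse>\<inverse>) < m}" for X
    proof -
      have "(n - m) * (n - m) \<le> (n - card (bad_rows n X)) * (n - card (bad_rows n X\<inverse>\<inverse>))"
        using that by (intro mult_le_mono) auto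
      then show ?thesis
        using card_D11_ge[of n X] by (simp add: power2_eq_square)
    qed
  qed (use assms finite_arrays D11_subset_arrays in \<open>auto simp: criss_cross_11_code_def\<close>)
  then show ?thesis
    by (simp add: card_arrays)
qed

lemma card_many_bad_le:
  "card {X\<in>arrays n. m \<le> card (bad_rows n X) \<or> m \<le> card (bad_rows n X\<inverse>\<inverse>)}
    \<le> 2 * ((n - 1 choose m) * ((2^n) ^ (n - m) * (2 * n^2) ^ m))"
proof -
  have "card {X\<in>arrays n. m \<le> card (bad_rows n X) \<or> m \<le> card (bad_rows n X\<inverse>\<inverse>)}
      \<le> card {X\<in>arrays n. m \<le> card (bad_rows n X)} + card {X\<in>arrays n. m \<le> card (bad_rows n X\<inverse>\<inverse>)}"
    by (simp add: Collect_conj_eq Collect_disj_eq Int_Un_distrib card_Un_le)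
  then show ?thesis
    using card_many_bad_rows_le[of n m] by (simp add: card_many_bad_cols_eq)
qed

lemma card_code_le:
  assumes code: "criss_cross_11_code n C" and "m < n"
  shows "real (card C) \<le> 2 ^ ((n - 1) * (n - 1)) / real ((n - m)^2)
    + 2 * real (n - 1 choose m) * ((2^n) ^ (n - m) * (2 * real n^2) ^ m)"
proof -
  define G where "G = {X\<in>C. card (bad_rows n X) < m \<and> card (bad_rows n X\<inverse>\<inverse>) < m}"
  define H where "H = {X\<in>arrays n. m \<le> card (bad_rows n X) \<or> m \<le> card (bad_rows n X\<inverse>\<inverse>)}"
  have "C \<subseteq> arrays n"
    using code unfolding criss_cross_11_code_def by auto
  moreover have "finite (G \<union> H)"
    using \<open>C \<subseteq> arrays n\<close> finite_arrays unfolding G_def H_def by (auto intro: finite_subset)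
  ultimately have "card C \<le> card (G \<union> H)"
    by (intro card_mono) (auto simp: G_def H_def)
  also have "\<dots> \<le> card G + card H"
    by (rule card_Un_le)
  finally have "card C \<le> card G + card H" .
  have "real (card G) * real ((n - m)^2) \<le> 2 ^ ((n - 1) * (n - 1))"
    using card_code_few_bad_le[OF code, of m] unfolding G_def[symmetric]
    by (metis of_nat_le_iff of_nat_mult of_nat_numeral of_nat_power)
  then have "real (card G) \<le> 2 ^ ((n - 1) * (n - 1)) / real ((n - m)^2)"
    using \<open>m < n\<close> by (simp add: pos_le_divide_eq del: of_nat_power)
  moreover have "real (card H) \<le> 2 * real (n - 1 choose m) * ((2^n) ^ (n - m) * (2 * real n^2) ^ m)"
    using of_nat_mono[OF card_many_bad_le[of n m], where ?'a = real] unfolding H_def by (simp add: mult.assoc)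
  ultimately show ?thesis
    using \<open>card C \<le> card G + card H\<close> by linarith
qed

definition eps :: "nat \<Rightarrow> real" where
  "eps n = real n^2 * 2 ^ (3 * n) / 4 * (2 * real n^2 / 2^n) ^ (n div 4)"

lemma eps_nonneg: "0 \<le> eps n"
  unfolding eps_def by simp

lemma eps_tendsto_zero: "eps \<longlonglongrightarrow> 0"
proof (rule tendsto_sandwich)
  define q where "q n = 2 * real n^2 / 2^n" for n :: nat
  show "\<forall>\<^sub>F n in sequentially. 0 \<le> eps n"
    by (simp add: eps_nonneg)
  \<comment> \<open>The exponent n div 4 is out of reach of real_asymp; as q n \<le> 1 eventually, it can be
    replaced by the smaller real exponent (n - 3) / 4.\<close>
  have "\<forall>\<^sub>F n in sequentially. q n \<le> 1"
    unfolding q_def by real_asymp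
  then show "\<forall>\<^sub>F n in sequentially. eps n \<le> real n^2 * 2 ^ (3 * n) / 4 * q n powr ((real n - 3) / 4)"
  proof eventually_elim
    case (elim n)
    have "n \<le> 4 * (n div 4) + 3"
      by linarith
    then have "real n \<le> 4 * real (n div 4) + 3"
      by linarith
    then have "(real n - 3) / 4 \<le> real (n div 4)"
      by simp
    then have "q n ^ (n div 4) \<le> q n powr ((real n - 3) / 4)" if "n > 0"
      using elim that by (subst powr_realpow[symmetric]) (auto simp: q_def intro: powr_mono')
    then show ?case
      unfolding eps_def q_def[symmetric] by (cases "n = 0") (auto intro: mult_left_mono)
  qed
  show "(\<lambda>n. real n^2 * 2 ^ (3 * n) / 4 * q n powr ((real n - 3) / 4)) \<longlonglongrightarrow> 0"
    unfolding q_def by real_asymp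
qed simp

lemma sphere_bound_eq:
  assumes "1 \<le> n"
  shows "(2::real) ^ (n^2) / (2 ^ (2 * n - 1) * (real (n^2) / 2)) = 2 * 2 ^ ((n - 1) * (n - 1)) / real n^2"
proof -
  have "n^2 = (n - 1) * (n - 1) + (2 * n - 1)"
    using assms by (cases n) (auto simp: power2_eq_square)
  then have "(2::real) ^ (n^2) = 2 ^ ((n - 1) * (n - 1)) * 2 ^ (2 * n - 1)"
    by (metis power_add)
  then show ?thesis
    using assms by (simp add: field_simps)
qed

lemma binomial_pow_bound_le:
  assumes "1 \<le> n" "m \<le> n"
  shows "2 * real (n - 1 choose m) * ((2^n) ^ (n - m) * (2 * real n^2) ^ m)
    \<le> 2^n * 2 ^ (n * n) * (2 * real n^2 / 2^n) ^ m"
proof -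
  have "2 * real (n - 1 choose m) \<le> 2 * 2 ^ (n - 1)"
    using binomial_le_pow2[of "n - 1" m] by (simp flip: of_nat_le_iff)
  also have "\<dots> = 2 ^ n"
    using assms(1) by (simp flip: power_Suc)
  finally have binomial_le: "2 * real (n - 1 choose m) \<le> 2 ^ n" .
  have "(2::real) ^ (n * n) = (2^n) ^ (n - m) * (2^n) ^ m"
    using assms(2) by (simp add: power_mult power_add[symmetric])
  then have "(2^n) ^ (n - m) * (2 * real n^2) ^ m = 2 ^ (n * n) * (2 * real n^2 / 2^n) ^ m"
    by (simp add: power_divide)
  then have "2 * real (n - 1 choose m) * ((2^n) ^ (n - m) * (2 * real n^2) ^ m)
      = 2 * real (n - 1 choose m) * (2 ^ (n * n) * (2 * real n^2 / 2^n) ^ m)"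
    by simp
  also have "\<dots> \<le> 2^n * (2 ^ (n * n) * (2 * real n^2 / 2^n) ^ m)"
    using binomial_le by (rule mult_right_mono) simp
  finally show ?thesis
    by (simp add: mult.assoc)
qed

lemma eps_mult_sphere_bound:
  assumes "1 \<le> n"
  shows "eps n * (2 * 2 ^ ((n - 1) * (n - 1)) / real n^2) = 2^n * 2 ^ (n * n) * (2 * real n^2 / 2^n) ^ (n div 4)"
proof -
  have "1 + (n - 1) * (n - 1) + 3 * n = 2 + n + n * n"
    using assms by (cases n) auto
  then have "(2::real) * 2 ^ ((n - 1) * (n - 1)) * 2 ^ (3 * n) = 2 ^ (2 + n + n * n)"
    by (metis power_add power_one_right)
  also have "\<dots> = 4 * 2 ^ n * 2 ^ (n * n)"
    by (simp add: power_add)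
  finally have "(2::real) * 2 ^ ((n - 1) * (n - 1)) * 2 ^ (3 * n) = 4 * 2 ^ n * 2 ^ (n * n)" .
  then show ?thesis
    using assms unfolding eps_def by (simp add: field_simps)
qed

lemma half_sq_le_sq_diff_div4: "real n^2 / 2 \<le> real (n - n div 4)^2"
proof -
  have "3 * n \<le> 4 * (n - n div 4)"
    by presburger
  then have "(3 * n)^2 \<le> (4 * (n - n div 4))^2"
    by (rule power_mono) simp
  then have "9 * real n^2 \<le> 16 * real (n - n div 4)^2"
    using of_nat_mono[where ?'a = real] by (fastforce simp: power_mult_distrib)
  then show ?thesis
    using zero_le_power2[of "real n"] by linarith
qed

lemma card_code_le_sphere_bound:
  assumes "1 \<le> n" "criss_cross_11_code n C"
  shows "real (card C) \<le> (1 + eps n) * 2 ^ (n^2) / (2 ^ (2 * n - 1) * (real (n^2) / 2))"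
proof -
  define m where "m = n div 4"
  define T where "T = 2 * 2 ^ ((n - 1) * (n - 1)) / (real n^2 :: real)"
  have "m < n" "m \<le> n"
    using assms(1) unfolding m_def by auto
  have "2 ^ ((n - 1) * (n - 1)) / real (n - m)^2 \<le> 2 ^ ((n - 1) * (n - 1)) / (real n^2 / 2)"
    using half_sq_le_sq_diff_div4[of n] assms(1) \<open>m < n\<close> unfolding m_def by (intro divide_left_mono) auto
  then have good: "2 ^ ((n - 1) * (n - 1)) / real ((n - m)^2) \<le> T"
    unfolding T_def by (simp add: mult.commute)
  have "2 * real (n - 1 choose m) * ((2^n) ^ (n - m) * (2 * real n^2) ^ m)
      \<le> 2^n * 2 ^ (n * n) * (2 * real n^2 / 2^n) ^ m"
    using assms(1) \<open>m \<le> n\<close> by (rule binomial_pow_bound_le)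
  also have "\<dots> = eps n * T"
    unfolding m_def T_def using assms(1) by (rule eps_mult_sphere_bound[symmetric])
  finally have bad: "2 * real (n - 1 choose m) * ((2^n) ^ (n - m) * (2 * real n^2) ^ m) \<le> eps n * T" .
  have "real (card C) \<le> (1 + eps n) * T"
    using card_code_le[OF assms(2) \<open>m < n\<close>] good bad by (simp add: distrib_right)
  also have "\<dots> = (1 + eps n) * 2 ^ (n^2) / (2 ^ (2 * n - 1) * (real (n^2) / 2))"
    unfolding T_def sphere_bound_eq[OF assms(1), symmetric] by (rule times_divide_eq_right)
  finally show ?thesis .
qed

lemma redundancy_ge:
  fixes c e :: real
  assumes "1 \<le> n" "0 < c" "0 \<le> e" "c \<le> (1 + e) * 2 ^ (n^2) / (2 ^ (2 * n - 1) * (real (n^2) / 2))"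
  shows "real (2 * n) - 2 + 2 * log 2 (real n) - log 2 (1 + e) \<le> real (n^2) - log 2 c"
proof -
  have "log 2 c \<le> log 2 ((1 + e) * 2 ^ (n^2) / (2 ^ (2 * n - 1) * (real (n^2) / 2)))"
    using assms by (subst log_le_cancel_iff) auto
  also have "\<dots> = log 2 (1 + e) + real (n^2) - real (2 * n - 1) - 2 * log 2 (real n) + 1"
    using assms by (simp add: log_mult log_divide log_nat_power)
  finally show ?thesis
    using assms(1) by (simp add: of_nat_diff)
qed

theorem theorem2:
  "\<exists>\<epsilon> :: nat \<Rightarrow> real. (\<forall>n. \<epsilon> n \<ge> 0) \<and> \<epsilon> \<longlonglongrightarrow> 0 \<and>
     (\<forall>n C. 1 \<le> n \<longrightarrow> criss_cross_11_code n C \<longrightarrow>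
        real (card C) \<le> (1 + \<epsilon> n) * 2 ^ (n^2) / (2 ^ (2*n - 1) * (real (n^2) / 2))
      \<and> (C \<noteq> {} \<longrightarrow>
        real (n^2) - log 2 (real (card C)) \<ge> real (2*n) - 2 + 2 * log 2 (real n) - log 2 (1 + \<epsilon> n)))"
proof (intro exI[of _ eps] conjI allI impI)
  show "0 \<le> eps n" for n
    by (rule eps_nonneg)
  show "eps \<longlonglongrightarrow> 0"
    by (rule eps_tendsto_zero)
  fix n C
  assume n: "1 \<le> n" and code: "criss_cross_11_code n C"
  show bound: "real (card C) \<le> (1 + eps n) * 2 ^ (n^2) / (2 ^ (2*n - 1) * (real (n^2) / 2))"
    using n code by (rule card_code_le_sphere_bound)
  assume "C \<noteq> {}"
  moreover have "finite C"
    using code finite_arrays finite_subset unfolding criss_cross_11_code_def by blast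
  ultimately have "0 < real (card C)"
    by (simp add: card_gt_0_iff)
  then show "real (2*n) - 2 + 2 * log 2 (real n) - log 2 (1 + eps n) \<le> real (n^2) - log 2 (real (card C))"
    using n eps_nonneg bound by (intro redundancy_ge) auto
qed

end
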